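(* Let $\mathcal{P}_1,\mathcal{P}_2$ be finite posets such that $\mathcal{C}(\mathcal{P}_j)$ has $q_j$ extremal rays for $j=1,2$, and suppose $\mathcal{C}(\mathcal{P}_2)$ is simplicial. Then the maximum ND rank of matrices in $\mathcal{C}(\mathcal{P}_1)\otimes\mathcal{C}(\mathcal{P}_2)$ is $\min(q_1,q_2)$.
   Context: For a finite poset $\mathcal{Q}$, the order cone $\mathcal{C}(\mathcal{Q})\subset\mathbb{R}^{\mathcal{Q}}$ is the set of $\mathbf{f}$ with $f_x\ge0$ for all $x$ and $f_x\le f_y$ whenever $x\preceq y$; an extremal ray is a one-dimensional face, and a cone in $\mathbb{R}^p$ is simplicial if it is the conical hull of $p$ linearly independent vectors. $\mathcal{C}(\mathcal{P}_1)\otimes\mathcal{C}(\mathcal{P}_2)$ is the set of matrices $\sum_{i=1}^r\mathbf{a}_i\mathbf{b}_i^\intercal$ (finite $r$) with $\mathbf{a}_i\in\mathcal{C}(\mathcal{P}_1)$, $\mathbf{b}_i\in\mathcal{C}(\mathcal{P}_2)$; the ND rank of such a matrix is the minimal such $r$, and the maximum ND rank is the largest ND rank attained by such matrices. *)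

theory Defs
  imports "HOL-Analysis.Analysis"
begin

text \<open>A finite poset is modelled as a finite type with a partial order (type class order).
  The space R^Q is real ^ 'q.\<close>

definition order_cone :: "(real ^ ('q::{finite,order})) set" where
  "order_cone = {f. (\<forall>x. 0 \<le> f $ x) \<and> (\<forall>x y. x \<le> y \<longrightarrow> f $ x \<le> f $ y)}"

definition extremal_rays :: "('a::euclidean_space) set \<Rightarrow> 'a set set" where
  "extremal_rays C = {F. F face_of C \<and> aff_dim F = 1}"

definition conical_hull :: "('a::real_vector) set \<Rightarrow> 'a set" where
  "conical_hull S = {x. \<exists>T c. finite T \<and> T \<subseteq> S \<and> (\<forall>v\<in>T. 0 \<le> c v) \<and> x = (\<Sum>v\<in>T. c v *\<^sub>R v)}"

definition simplicial :: "(real ^ ('n::finite)) set \<Rightarrow> bool" where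
  "simplicial C \<longleftrightarrow> (\<exists>S. independent S \<and> card S = CARD('n) \<and> C = conical_hull S)"

definition outer_prod :: "real ^ 'm \<Rightarrow> real ^ 'n \<Rightarrow> real ^ 'n ^ 'm" where
  "outer_prod a b = (\<chi> i j. a $ i * b $ j)"

definition nd_decomp :: "(real ^ 'm) set \<Rightarrow> (real ^ 'n) set \<Rightarrow> real ^ 'n ^ 'm \<Rightarrow> nat \<Rightarrow> bool" where
  "nd_decomp C1 C2 M r \<longleftrightarrow>
     (\<exists>a b. (\<forall>i<r. a i \<in> C1 \<and> b i \<in> C2) \<and> M = (\<Sum>i<r. outer_prod (a i) (b i)))"

definition cone_tensor :: "(real ^ 'm) set \<Rightarrow> (real ^ 'n) set \<Rightarrow> (real ^ 'n ^ 'm) set" where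
  "cone_tensor C1 C2 = {M. \<exists>r. nd_decomp C1 C2 M r}"

definition nd_rank :: "(real ^ 'm) set \<Rightarrow> (real ^ 'n) set \<Rightarrow> real ^ 'n ^ 'm \<Rightarrow> nat" where
  "nd_rank C1 C2 M = (LEAST r. nd_decomp C1 C2 M r)"

end

theory Submission
  imports Defs
begin

text \<open>An order cone is a pointed polyhedral cone: its section by the hyperplane of coordinate sum 1
  is a polytope, and the rays through its extreme points are exactly the extremal rays of the cone,
  so the cone is generated by \<open>q\<^sub>j\<close> vectors. Expanding either factor of a decomposition
  in these generators bounds the ND rank by \<open>q\<^sub>1\<close> and by \<open>q\<^sub>2\<close>.

  Conversely, let \<open>C(P\<^sub>2)\<close> be generated by a linearly independent set \<open>S\<close>. Every extremal
  ray of \<open>C(P\<^sub>2)\<close> contains an element of \<open>S\<close>, so \<open>q = min q\<^sub>1 q\<^sub>2 \<le> |S|\<close>, and we may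
  pair nonzero points \<open>u\<^sub>k\<close> of \<open>q\<close> distinct extremal rays of \<open>C(P\<^sub>1)\<close> with distinct
  \<open>w\<^sub>k \<in> S\<close>. In any decomposition of \<open>\<Sum> u\<^sub>k w\<^sub>k\<^sup>T\<close>, expanding the second factors in
  \<open>S\<close> and comparing coefficients writes each \<open>u\<^sub>k\<close> as a nonnegative combination of the first
  factors. Since the ray of \<open>u\<^sub>k\<close> is a face, one of these factors lies on it, and distinct
  rays meet only in 0, so the decomposition has at least \<open>q\<close> terms.\<close>

lemma convex_cone_sum:
  assumes "convex_cone C" "\<And>i. i \<in> I \<Longrightarrow> x i \<in> C"
  shows "sum x I \<in> C"
  using assms(2)
  by (induction I rule: infinite_finite_induct)
     (auto intro: convex_cone_add convex_cone_contains_0 assms(1))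

lemma subset_conical_hull: "S \<subseteq> conical_hull S"
proof
  fix v assume "v \<in> S"
  then show "v \<in> conical_hull S"
    unfolding conical_hull_def by (intro CollectI exI[of _ "{v}"] exI[of _ "\<lambda>_. 1"]) auto
qed

lemma conical_hull_finite:
  assumes "finite S"
  shows "conical_hull S = {y. \<exists>d. (\<forall>v\<in>S. 0 \<le> d v) \<and> y = (\<Sum>v\<in>S. d v *\<^sub>R v)}"
proof (intro set_eqI iffI)
  fix y assume "y \<in> conical_hull S"
  then obtain T c where T: "finite T" "T \<subseteq> S" "\<forall>v\<in>T. 0 \<le> c v" "y = (\<Sum>v\<in>T. c v *\<^sub>R v)"
    by (auto simp: conical_hull_def)
  define d where "d v = (if v \<in> T then c v else 0)" for v
  have "y = (\<Sum>v\<in>S. d v *\<^sub>R v)"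
    using T assms by (simp add: d_def if_distrib[of "\<lambda>c. c *\<^sub>R _"] sum.If_cases Int_absorb1)
  then show "y \<in> {y. \<exists>d. (\<forall>v\<in>S. 0 \<le> d v) \<and> y = (\<Sum>v\<in>S. d v *\<^sub>R v)}"
    using T by (auto simp: d_def intro!: exI[of _ d])
qed (use assms in \<open>auto simp: conical_hull_def\<close>)

lemma conic_face_of_convex_cone: "F face_of C \<Longrightarrow> convex_cone C \<Longrightarrow> conic F"
  using face_of_conic by (auto simp: convex_cone_def)

lemma face_of_convex_cone_add:
  assumes F: "F face_of C" and C: "convex_cone C"
    and "x \<in> C" "y \<in> C" "x + y \<in> F"
  shows "x \<in> F"
proof -
  have conic: "conic F"
    using conic_face_of_convex_cone[OF F C] .
  have "2 *\<^sub>R x \<in> F"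
  proof (cases "x = y")
    case True
    then show ?thesis using \<open>x + y \<in> F\<close> by (simp add: scaleR_2)
  next
    case False
    have "x + y \<in> open_segment (2 *\<^sub>R x) (2 *\<^sub>R y)"
      using False by (auto simp: in_segment intro!: exI[of _ "1/2"])
    then show ?thesis
      using face_ofD[OF F] \<open>x + y \<in> F\<close> assms(3,4) C by (meson convex_cone_scaleR zero_le_numeral)
  qed
  then show ?thesis
    using conic_mul[OF conic, of "2 *\<^sub>R x" "1/2"] by simp
qed

lemma face_of_convex_cone_sum:
  assumes F: "F face_of C" and C: "convex_cone C"
    and "finite I" "\<And>i. i \<in> I \<Longrightarrow> x i \<in> C" "sum x I \<in> F" "i \<in> I"
  shows "x i \<in> F"
proof (rule face_of_convex_cone_add[OF F C])
  show "x i + sum x (I - {i}) \<in> F"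
    using assms(3,5,6) by (simp add: sum.remove)
qed (use assms in \<open>auto intro: convex_cone_sum\<close>)

lemma face_of_convex_cone_combination:
  assumes F: "F face_of C" and C: "convex_cone C" and "finite I"
    and a: "\<And>i. i \<in> I \<Longrightarrow> a i \<in> C" and d: "\<And>i. i \<in> I \<Longrightarrow> 0 \<le> d i"
    and sum: "(\<Sum>i\<in>I. d i *\<^sub>R a i) \<in> F - {0}"
  obtains i where "i \<in> I" "a i \<in> F - {0}"
proof -
  obtain i where i: "i \<in> I" "d i *\<^sub>R a i \<noteq> 0"
    using sum sum.neutral[of I "\<lambda>i. d i *\<^sub>R a i"] by blast
  have "d i *\<^sub>R a i \<in> F"
    using face_of_convex_cone_sum[OF F C \<open>finite I\<close>, of "\<lambda>i. d i *\<^sub>R a i", OF _ _ i(1)] sum a d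
    by (auto intro: convex_cone_scaleR[OF C])
  moreover have "conic F"
    using conic_face_of_convex_cone[OF F C] .
  moreover have "d i > 0"
    using d[OF i(1)] i(2) by force
  ultimately have "(1 / d i) *\<^sub>R d i *\<^sub>R a i \<in> F"
    by (metis conic_mul less_eq_real_def zero_le_divide_1_iff)
  then show thesis
    using that i \<open>d i > 0\<close> by auto
qed

lemma extremal_rays_eq_if_Int_nonzero:
  fixes C :: "'a::euclidean_space set"
  assumes C: "convex_cone C" and F: "F \<in> extremal_rays C" and G: "G \<in> extremal_rays C"
    and x: "x \<in> F \<inter> G" "x \<noteq> 0"
  shows "F = G"
proof -
  have faces: "F face_of C" "G face_of C" and dims: "aff_dim F = 1" "aff_dim G = 1"
    using F G by (auto simp: extremal_rays_def)
  have "conic F" "conic G"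
    using conic_face_of_convex_cone faces C by blast+
  then have "{0, x} \<subseteq> F \<inter> G"
    using x conic_contains_0 by auto
  then have "aff_dim {0, x} \<le> aff_dim (F \<inter> G)"
    by (rule aff_dim_subset)
  then have one: "1 \<le> aff_dim (F \<inter> G)"
    using x(2) by simp
  have "F \<inter> G = H" if H: "H face_of C" "aff_dim H = 1" and sub: "F \<inter> G face_of H" for H
  proof (rule ccontr)
    assume "F \<inter> G \<noteq> H"
    with face_of_aff_dim_lt[OF face_of_imp_convex[OF H(1)] sub] have "aff_dim (F \<inter> G) < 1"
      using H(2) by simp
    with one show False by simp
  qed
  moreover have "F \<inter> G face_of C"
    using face_of_Int[OF faces] .
  ultimately have "F \<inter> G = F" "F \<inter> G = G"
    using faces dims face_of_subset face_of_imp_subset by (metis inf_le1 inf_le2)+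
  then show ?thesis by simp
qed

lemma extremal_ray_obtain_nonzero:
  fixes C :: "'a::euclidean_space set"
  assumes "F \<in> extremal_rays C"
  obtains x where "x \<in> F" "x \<noteq> 0"
proof -
  have "\<not> F \<subseteq> {0}"
  proof
    assume "F \<subseteq> {0}"
    then have "aff_dim F \<le> aff_dim {0::'a}"
      by (rule aff_dim_subset)
    then show False
      using assms by (simp add: extremal_rays_def)
  qed
  then show thesis
    using that by blast
qed

lemma card_extremal_rays_le:
  fixes S :: "'a::euclidean_space set"
  assumes C: "convex_cone C" and S: "finite S" "S \<subseteq> C" "C \<subseteq> conical_hull S"
  shows "card (extremal_rays C) \<le> card S"
proof -
  have "\<exists>v\<in>S. v \<in> F - {0}" if F: "F \<in> extremal_rays C" for F
  proof -
    have face: "F face_of C"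
      using F by (simp add: extremal_rays_def)
    obtain x where x: "x \<in> F" "x \<noteq> 0"
      using extremal_ray_obtain_nonzero[OF F] .
    then have "x \<in> conical_hull S"
      using face_of_imp_subset[OF face] S(3) by blast
    then obtain d where d: "\<forall>v\<in>S. 0 \<le> d v" "x = (\<Sum>v\<in>S. d v *\<^sub>R v)"
      using conical_hull_finite[OF S(1)] by blast
    show ?thesis
      using face_of_convex_cone_combination[OF face C S(1), of "\<lambda>v. v" d] d x S(2) by blast
  qed
  then obtain \<phi> where \<phi>: "\<And>F. F \<in> extremal_rays C \<Longrightarrow> \<phi> F \<in> S \<and> \<phi> F \<in> F - {0}"
    by metis
  have "inj_on \<phi> (extremal_rays C)"
    by (rule inj_onI) (use \<phi> extremal_rays_eq_if_Int_nonzero[OF C] in \<open>metis DiffE IntI insertI1\<close>)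
  then show ?thesis
    using card_inj_on_le[of \<phi> "extremal_rays C" S] \<phi> S(1) by blast
qed

lemma aff_dim_conic_hull_singleton:
  fixes x :: "'a::euclidean_space"
  assumes "x \<noteq> 0"
  shows "aff_dim (conic hull {x}) = 1"
proof (rule antisym)
  have "conic hull {x} \<subseteq> span {x}"
    by (rule hull_minimal) (auto simp: span_base)
  then have "aff_dim (conic hull {x}) \<le> aff_dim (span {x})"
    by (rule aff_dim_subset)
  then show "aff_dim (conic hull {x}) \<le> 1"
    using assms by (simp add: aff_dim_subspace)
  have "{0, x} \<subseteq> conic hull {x}"
    by (auto simp: conic_hull_explicit intro: exI[of _ 0] exI[of _ 1])
  then have "aff_dim {0, x} \<le> aff_dim (conic hull {x})"
    by (rule aff_dim_subset)
  then show "1 \<le> aff_dim (conic hull {x})"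
    using assms by simp
qed

lemma extreme_point_of_convex_combination:
  assumes x: "x extreme_point_of S" and pq: "p \<in> S" "q \<in> S"
    and u: "0 < u" "u < 1" and comb: "x = (1 - u) *\<^sub>R p + u *\<^sub>R q"
  shows "p = x"
proof (cases "p = q")
  case True
  then show ?thesis
    using comb by (simp add: algebra_simps)
next
  case False
  then have "x \<in> open_segment p q"
    using u comb by (auto simp: in_segment)
  then show ?thesis
    using x pq by (auto simp: extreme_point_of_def)
qed

locale cone_with_base =
  fixes C :: "'a::euclidean_space set" and a :: 'a
  assumes convex_cone: "convex_cone C"
    and inner_pos: "\<And>x. x \<in> C \<Longrightarrow> x \<noteq> 0 \<Longrightarrow> 0 < a \<bullet> x"
begin

definition base :: "'a set" where
  "base = C \<inter> {x. a \<bullet> x = 1}"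

lemma convex_base: "convex base"
  using convex_cone by (simp add: base_def convex_cone_def convex_Int convex_hyperplane)

lemma normalize_in_base:
  assumes "x \<in> C" "x \<noteq> 0"
  shows "(1 / (a \<bullet> x)) *\<^sub>R x \<in> base"
  using assms inner_pos[OF assms] by (simp add: base_def convex_cone_scaleR[OF convex_cone])

lemma base_nonzero: "x \<in> base \<Longrightarrow> x \<noteq> 0"
  by (auto simp: base_def)

lemma conic_hull_base_inj:
  assumes "e \<in> base" "e' \<in> base" "conic hull {e} = conic hull {e'}"
  shows "e = e'"
proof -
  have "e \<in> conic hull {e'}"
    by (metis assms(3) hull_inc singletonI)
  then obtain c where "e = c *\<^sub>R e'"
    by (auto simp: conic_hull_explicit)
  moreover have "c = 1"
    using assms(1,2) arg_cong[OF \<open>e = c *\<^sub>R e'\<close>, of "inner a"] by (simp add: base_def)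
  ultimately show ?thesis by simp
qed

lemma extreme_point_conic_hull_summand:
  assumes e: "e extreme_point_of base" and yz: "y \<in> C" "z \<in> C" "y + z \<in> conic hull {e}"
  shows "y \<in> conic hull {e}"
proof -
  consider "y = 0" | "z = 0" | "y \<noteq> 0" "z \<noteq> 0" by blast
  then show ?thesis
  proof cases
    case 1
    then show ?thesis by (auto simp: conic_hull_explicit intro: exI[of _ 0])
  next
    case 2
    then show ?thesis using yz by simp
  next
    case 3
    have e_base: "e \<in> base"
      using e by (simp add: extreme_point_of_def)
    define s t where "s = a \<bullet> y" and "t = a \<bullet> z"
    have st: "0 < s" "0 < t"
      using inner_pos 3 yz by (auto simp: s_def t_def)
    define y' z' where "y' = (1 / s) *\<^sub>R y" and "z' = (1 / t) *\<^sub>R z"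
    have base': "y' \<in> base" "z' \<in> base"
      using normalize_in_base 3 yz by (auto simp: y'_def z'_def s_def t_def)
    obtain c where c: "y + z = c *\<^sub>R e"
      using yz(3) by (auto simp: conic_hull_explicit)
    have "c = s + t"
      using arg_cong[OF c, of "inner a"] e_base by (simp add: base_def inner_add_right s_def t_def)
    then have "e = (1 / (s + t)) *\<^sub>R (y + z)"
      using c st by simp
    also have "\<dots> = (s / (s + t)) *\<^sub>R y' + (t / (s + t)) *\<^sub>R z'"
      using st by (simp add: y'_def z'_def scaleR_add_right)
    also have "s / (s + t) = 1 - t / (s + t)"
      using st by (simp add: field_simps)
    finally have "y' = e"
      by (rule extreme_point_of_convex_combination[OF e base', rotated 2]) (use st in auto)
    then have "y = s *\<^sub>R e"
      using st by (auto simp: y'_def)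
    then show ?thesis
      using st by (auto simp: conic_hull_explicit)
  qed
qed

lemma conic_hull_extreme_point_face_of:
  assumes e: "e extreme_point_of base"
  shows "conic hull {e} face_of C"
proof -
  have conic: "conic C"
    using convex_cone by (simp add: convex_cone_def)
  have sub: "conic hull {e} \<subseteq> C"
    using e conic by (intro hull_minimal) (auto simp: extreme_point_of_def base_def)
  have absorb: "p \<in> conic hull {e}"
    if "p \<in> C" "q \<in> C" "0 < u" "u < 1" "(1 - u) *\<^sub>R p + u *\<^sub>R q \<in> conic hull {e}" for p q u
  proof -
    have "(1 - u) *\<^sub>R p \<in> conic hull {e}"
      using extreme_point_conic_hull_summand[OF e, of "(1 - u) *\<^sub>R p" "u *\<^sub>R q"] that
        convex_cone_scaleR[OF convex_cone] by simp
    then have "(1 / (1 - u)) *\<^sub>R (1 - u) *\<^sub>R p \<in> conic hull {e}"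
      by (rule conic_mul[OF conic_conic_hull]) (use that in simp)
    then show ?thesis
      using that by simp
  qed
  have "p \<in> conic hull {e} \<and> q \<in> conic hull {e}"
    if pq: "p \<in> C" "q \<in> C" and x: "x \<in> conic hull {e}" "x \<in> open_segment p q" for p q x
  proof -
    obtain u where "0 < u" "u < 1" "x = (1 - u) *\<^sub>R p + u *\<^sub>R q"
      using x(2) by (auto simp: in_segment)
    then show ?thesis
      using absorb[of p q u] absorb[of q p "1 - u"] pq x by (simp add: add.commute)
  qed
  then show ?thesis
    unfolding face_of_def using sub convex_conic_hull[OF convex_singleton] by blast
qed

lemma conic_hull_extreme_point_in_extremal_rays:
  assumes e: "e extreme_point_of base"
  shows "conic hull {e} \<in> extremal_rays C"
proof -
  have "e \<noteq> 0"
    using e base_nonzero by (simp add: extreme_point_of_def)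
  then show ?thesis
    by (simp add: extremal_rays_def conic_hull_extreme_point_face_of[OF e] aff_dim_conic_hull_singleton)
qed

lemma card_extreme_points_base_le:
  assumes "finite (extremal_rays C)"
  shows "card {e. e extreme_point_of base} \<le> card (extremal_rays C)"
proof (rule card_inj_on_le[of "\<lambda>e. conic hull {e}"])
  show "inj_on (\<lambda>e. conic hull {e}) {e. e extreme_point_of base}"
    using conic_hull_base_inj by (auto simp: inj_on_def extreme_point_of_def)
qed (use assms conic_hull_extreme_point_in_extremal_rays in auto)

lemma subset_conical_hull_extreme_points:
  assumes "compact base"
  shows "C \<subseteq> conical_hull {e. e extreme_point_of base}"
proof
  fix x assume x: "x \<in> C"
  show "x \<in> conical_hull {e. e extreme_point_of base}"
  proof (cases "x = 0")
    case True
    then show ?thesis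
      by (auto simp: conical_hull_def intro!: exI[of _ "{}"])
  next
    case False
    have "(1 / (a \<bullet> x)) *\<^sub>R x \<in> convex hull {e. e extreme_point_of base}"
      using normalize_in_base[OF x False] Krein_Milman_Minkowski[OF assms convex_base] by simp
    then obtain T u where T: "finite T" "T \<subseteq> {e. e extreme_point_of base}" "\<forall>v\<in>T. 0 \<le> u v"
        and sum: "(\<Sum>v\<in>T. u v *\<^sub>R v) = (1 / (a \<bullet> x)) *\<^sub>R x"
      by (auto simp: convex_hull_explicit)
    have pos: "0 < a \<bullet> x"
      using inner_pos[OF x False] .
    have "x = (a \<bullet> x) *\<^sub>R (\<Sum>v\<in>T. u v *\<^sub>R v)"
      using pos by (simp add: sum)
    also have "\<dots> = (\<Sum>v\<in>T. ((a \<bullet> x) * u v) *\<^sub>R v)"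
      by (simp add: scaleR_sum_right)
    finally show ?thesis
      using T pos unfolding conical_hull_def by (auto intro!: exI[of _ T] exI[of _ "\<lambda>v. (a \<bullet> x) * u v"])
  qed
qed

end

lemma convex_cone_order_cone: "convex_cone (order_cone :: (real^'q::{finite,order}) set)"
  by (auto simp: convex_cone_iff order_cone_def intro: add_mono mult_left_mono)

lemma polyhedron_order_cone: "polyhedron (order_cone :: (real^'q::{finite,order}) set)"
proof -
  have eq: "(order_cone :: (real^'q::{finite,order}) set) =
     (\<Inter>i. {f. (- axis i 1) \<bullet> f \<le> 0}) \<inter>
     (\<Inter>p\<in>{p. fst p \<le> snd p}. {f. (axis (fst p) 1 - axis (snd p) 1) \<bullet> f \<le> 0})"
    by (auto simp: order_cone_def inner_diff_left inner_axis')
  show ?thesis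
    unfolding eq by (intro polyhedron_Int polyhedron_Inter) (auto intro: polyhedron_halfspace_le polyhedron_halfspace_ge)
qed

lemma inner_ones_order_cone_pos:
  assumes "f \<in> order_cone" "f \<noteq> 0"
  shows "0 < (\<chi> i. 1) \<bullet> f"
proof -
  obtain i where "f $ i \<noteq> 0"
    using assms(2) by (auto simp: vec_eq_iff)
  then have "0 < f $ i"
    using assms(1) by (simp add: order_cone_def order_less_le)
  then have "0 < (\<Sum>j\<in>UNIV. f $ j)"
    using assms(1) by (intro sum_pos2[of UNIV i]) (auto simp: order_cone_def)
  then show ?thesis
    by (simp add: inner_vec_def)
qed

interpretation order_cone: cone_with_base "order_cone :: (real^'q::{finite,order}) set" "\<chi> i. 1"
  by unfold_locales (use convex_cone_order_cone inner_ones_order_cone_pos in auto)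

lemma polyhedron_order_cone_base: "polyhedron (order_cone.base :: (real^'q::{finite,order}) set)"
  unfolding order_cone.base_def by (intro polyhedron_Int polyhedron_order_cone polyhedron_hyperplane)

lemma compact_order_cone_base: "compact (order_cone.base :: (real^'q::{finite,order}) set)"
proof -
  have "bounded (order_cone.base :: (real^'q::{finite,order}) set)"
    unfolding bounded_iff
  proof (intro exI ballI)
    fix f :: "real^'q::{finite,order}" assume "f \<in> order_cone.base"
    then have f: "f \<in> order_cone" "(\<chi> i. 1) \<bullet> f = 1"
      by (auto simp: order_cone.base_def)
    have "norm f \<le> (\<Sum>i\<in>UNIV. \<bar>f $ i\<bar>)"
      by (rule norm_le_l1_cart)
    also have "\<dots> = (\<chi> i. 1) \<bullet> f"
      using f(1) by (simp add: order_cone_def inner_vec_def)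
    finally show "norm f \<le> 1"
      using f(2) by simp
  qed
  moreover have "closed (order_cone.base :: (real^'q::{finite,order}) set)"
    by (rule polyhedron_imp_closed[OF polyhedron_order_cone_base])
  ultimately show ?thesis
    by (simp add: compact_eq_bounded_closed)
qed

lemma order_cone_generators:
  obtains G :: "(real^'q::{finite,order}) set"
  where "finite G" "G \<subseteq> order_cone" "order_cone \<subseteq> conical_hull G"
    "card G \<le> card (extremal_rays (order_cone :: (real^'q::{finite,order}) set))"
proof
  let ?G = "{e. e extreme_point_of (order_cone.base :: (real^'q::{finite,order}) set)}"
  show "finite ?G"
    by (rule finite_polyhedron_extreme_points[OF polyhedron_order_cone_base])
  show "?G \<subseteq> order_cone"
    by (auto simp: extreme_point_of_def order_cone.base_def)
  show "order_cone \<subseteq> conical_hull ?G"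
    by (rule order_cone.subset_conical_hull_extreme_points[OF compact_order_cone_base])
  have "finite (extremal_rays (order_cone :: (real^'q::{finite,order}) set))"
    using finite_polyhedron_faces[OF polyhedron_order_cone]
    by (rule finite_subset[rotated]) (auto simp: extremal_rays_def)
  then show "card ?G \<le> card (extremal_rays (order_cone :: (real^'q::{finite,order}) set))"
    by (rule order_cone.card_extreme_points_base_le)
qed

lemma sum_outer_prod_expand_right:
  "(\<Sum>i\<in>I. outer_prod (a i) (\<Sum>v\<in>G. d i v *\<^sub>R v)) = (\<Sum>v\<in>G. outer_prod (\<Sum>i\<in>I. d i v *\<^sub>R a i) v)"
  (is "?L = ?R")
proof -
  have "?L $ j $ l = ?R $ j $ l" for j l
  proof -
    have "?L $ j $ l = (\<Sum>i\<in>I. \<Sum>v\<in>G. d i v * a i $ j * v $ l)"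
      by (simp add: outer_prod_def sum_distrib_left mult_ac)
    also have "\<dots> = (\<Sum>v\<in>G. \<Sum>i\<in>I. d i v * a i $ j * v $ l)"
      by (rule sum.swap)
    also have "\<dots> = ?R $ j $ l"
      by (simp add: outer_prod_def sum_distrib_right)
    finally show ?thesis .
  qed
  then show ?thesis
    by (simp add: vec_eq_iff)
qed

lemma transpose_sum_outer_prod:
  "transpose (\<Sum>i\<in>I. outer_prod (a i) (b i)) = (\<Sum>i\<in>I. outer_prod (b i) (a i))"
  by (simp add: transpose_def outer_prod_def vec_eq_iff mult.commute)

lemma nd_decomp_transpose:
  "nd_decomp C2 C1 (transpose M) r \<longleftrightarrow> nd_decomp C1 C2 M r"
proof -
  have "nd_decomp C2 C1 (transpose M) r" if M: "nd_decomp C1 C2 M r" for C1 C2 M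
  proof -
    obtain a b where "\<forall>i<r. a i \<in> C1 \<and> b i \<in> C2" "M = (\<Sum>i<r. outer_prod (a i) (b i))"
      using M by (auto simp: nd_decomp_def)
    then show ?thesis
      unfolding nd_decomp_def by (intro exI[of _ b] exI[of _ a]) (simp add: transpose_sum_outer_prod)
  qed
  from this[of C1 C2 M] this[of C2 C1 "transpose M"] show ?thesis
    by auto
qed

lemma nd_decomp_sum:
  assumes "finite G" "\<And>v. v \<in> G \<Longrightarrow> A v \<in> C1 \<and> B v \<in> C2"
  shows "nd_decomp C1 C2 (\<Sum>v\<in>G. outer_prod (A v) (B v)) (card G)"
proof -
  obtain g where g: "bij_betw g {..<card G} G"
    using ex_bij_betw_nat_finite[OF assms(1)] by (auto simp: atLeast0LessThan)
  have "(\<Sum>v\<in>G. outer_prod (A v) (B v)) = (\<Sum>k<card G. outer_prod (A (g k)) (B (g k)))"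
    by (rule sum.reindex_bij_betw[OF g, symmetric])
  moreover have "A (g k) \<in> C1 \<and> B (g k) \<in> C2" if "k < card G" for k
    using assms(2) bij_betwE[OF g] that by blast
  ultimately show ?thesis
    unfolding nd_decomp_def by (intro exI[of _ "A \<circ> g"] exI[of _ "B \<circ> g"]) auto
qed

lemma nd_decomp_expand_right:
  assumes G: "finite G" "C2 \<subseteq> conical_hull G" and M: "nd_decomp C1 C2 M r"
  obtains a d where "\<And>i. i < r \<Longrightarrow> a i \<in> C1" "\<And>i v. i < r \<Longrightarrow> v \<in> G \<Longrightarrow> 0 \<le> d i v"
    "M = (\<Sum>v\<in>G. outer_prod (\<Sum>i<r. d i v *\<^sub>R a i) v)"
proof -
  obtain a b where ab: "\<And>i. i < r \<Longrightarrow> a i \<in> C1 \<and> b i \<in> C2" "M = (\<Sum>i<r. outer_prod (a i) (b i))"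
    using M by (auto simp: nd_decomp_def)
  have "\<exists>d. (\<forall>v\<in>G. 0 \<le> d v) \<and> b i = (\<Sum>v\<in>G. d v *\<^sub>R v)" if "i < r" for i
    using ab(1)[OF that] G(2) conical_hull_finite[OF G(1)] by blast
  then obtain d where d: "\<And>i. i < r \<Longrightarrow> (\<forall>v\<in>G. 0 \<le> d i v) \<and> b i = (\<Sum>v\<in>G. d i v *\<^sub>R v)"
    by metis
  have "M = (\<Sum>i<r. outer_prod (a i) (\<Sum>v\<in>G. d i v *\<^sub>R v))"
    unfolding ab(2) by (rule sum.cong) (use d in auto)
  also have "\<dots> = (\<Sum>v\<in>G. outer_prod (\<Sum>i<r. d i v *\<^sub>R a i) v)"
    by (rule sum_outer_prod_expand_right)
  finally show thesis
    using that ab(1) d by blast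
qed

lemma nd_decomp_card_generators:
  assumes C1: "convex_cone C1" and G: "finite G" "G \<subseteq> C2" "C2 \<subseteq> conical_hull G"
    and M: "nd_decomp C1 C2 M r"
  shows "nd_decomp C1 C2 M (card G)"
proof -
  obtain a d where a: "\<And>i. i < r \<Longrightarrow> a i \<in> C1" and d: "\<And>i v. i < r \<Longrightarrow> v \<in> G \<Longrightarrow> 0 \<le> d i v"
    and M_eq: "M = (\<Sum>v\<in>G. outer_prod (\<Sum>i<r. d i v *\<^sub>R a i) v)"
    using nd_decomp_expand_right[OF G(1,3) M] by blast
  have "(\<Sum>i<r. d i v *\<^sub>R a i) \<in> C1" if "v \<in> G" for v
    by (intro convex_cone_sum[OF C1] convex_cone_scaleR[OF C1]) (use a d that in auto)
  then show ?thesis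
    unfolding M_eq using G(2) by (intro nd_decomp_sum[OF G(1)]) blast
qed

lemma nd_rank_le_card_generators:
  assumes C: "convex_cone C1" "convex_cone C2" and M: "M \<in> cone_tensor C1 C2"
    and G1: "finite G1" "G1 \<subseteq> C1" "C1 \<subseteq> conical_hull G1"
    and G2: "finite G2" "G2 \<subseteq> C2" "C2 \<subseteq> conical_hull G2"
  shows "nd_rank C1 C2 M \<le> min (card G1) (card G2)"
proof -
  obtain r where r: "nd_decomp C1 C2 M r"
    using M by (auto simp: cone_tensor_def)
  have "nd_decomp C2 C1 (transpose M) (card G1)"
    using nd_decomp_card_generators[OF C(2) G1, of "transpose M" r] r by (simp add: nd_decomp_transpose)
  then have "nd_decomp C1 C2 M (card G1)"
    by (simp add: nd_decomp_transpose)
  moreover have "nd_decomp C1 C2 M (card G2)"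
    using nd_decomp_card_generators[OF C(1) G2 r] .
  ultimately show ?thesis
    unfolding nd_rank_def by (simp add: Least_le)
qed

lemma outer_prod_coefficients_unique:
  fixes S :: "(real^'n) set" and X Y :: "real^'n \<Rightarrow> real^'m"
  assumes S: "independent S"
    and eq: "(\<Sum>v\<in>S. outer_prod (X v) v) = (\<Sum>v\<in>S. outer_prod (Y v) v)"
    and v: "v \<in> S"
  shows "X v = Y v"
proof -
  have "X v $ j = Y v $ j" for j
  proof -
    have "(\<Sum>w\<in>S. X w $ j *\<^sub>R w) = (\<Sum>w\<in>S. Y w $ j *\<^sub>R w)"
      using arg_cong[OF eq, of "\<lambda>M. M $ j"] by (simp add: outer_prod_def vec_eq_iff)
    then have "(\<Sum>w\<in>S. (X w $ j - Y w $ j) *\<^sub>R w) = 0"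
      by (simp add: scaleR_diff_left sum_subtractf)
    then show ?thesis
      using S v unfolding independent_explicit by auto
  qed
  then show ?thesis
    by (simp add: vec_eq_iff)
qed

lemma card_le_nd_decomp_length:
  fixes C1 :: "(real^'m) set" and C2 :: "(real^'n) set"
  assumes C1: "convex_cone C1" and S: "independent S" "C2 \<subseteq> conical_hull S" and W: "W \<subseteq> S"
    and F: "inj_on F W" "\<And>v. v \<in> W \<Longrightarrow> F v \<in> extremal_rays C1"
    and u: "\<And>v. v \<in> W \<Longrightarrow> u v \<in> F v - {0}"
    and M: "nd_decomp C1 C2 (\<Sum>v\<in>W. outer_prod (u v) v) r"
  shows "card W \<le> r"
proof -
  have fin: "finite S"
    using S(1) by (rule finiteI_independent)
  obtain a d where a: "\<And>i. i < r \<Longrightarrow> a i \<in> C1" and d: "\<And>i v. i < r \<Longrightarrow> v \<in> S \<Longrightarrow> 0 \<le> d i v"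
    and M_eq: "(\<Sum>v\<in>W. outer_prod (u v) v) = (\<Sum>v\<in>S. outer_prod (\<Sum>i<r. d i v *\<^sub>R a i) v)"
    using nd_decomp_expand_right[OF fin S(2) M] by blast
  have "(\<Sum>v\<in>S. outer_prod (if v \<in> W then u v else 0) v) = (\<Sum>v\<in>W. outer_prod (u v) v)"
    by (rule sum.mono_neutral_cong_right[OF fin W]) (auto simp: outer_prod_def vec_eq_iff)
  then have u_comb: "u v = (\<Sum>i<r. d i v *\<^sub>R a i)" if "v \<in> W" for v
    using outer_prod_coefficients_unique[OF S(1), of "\<lambda>v. if v \<in> W then u v else 0"
        "\<lambda>v. \<Sum>i<r. d i v *\<^sub>R a i" v] M_eq W that by auto
  have "\<exists>i<r. a i \<in> F v - {0}" if v: "v \<in> W" for v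
  proof -
    have face: "F v face_of C1"
      using F(2)[OF v] by (simp add: extremal_rays_def)
    have "(\<Sum>i\<in>{..<r}. d i v *\<^sub>R a i) \<in> F v - {0}"
      using u[OF v] u_comb[OF v] by simp
    then obtain i where "i \<in> {..<r}" "a i \<in> F v - {0}"
      using face_of_convex_cone_combination[OF face C1 finite_lessThan[of r], of a "\<lambda>i. d i v"] a d W v
      by blast
    then show ?thesis by blast
  qed
  then obtain I where I: "\<And>v. v \<in> W \<Longrightarrow> I v < r \<and> a (I v) \<in> F v - {0}"
    by metis
  have "inj_on I W"
  proof (rule inj_onI)
    fix v v' assume v: "v \<in> W" "v' \<in> W" "I v = I v'"
    then have "a (I v) \<in> F v \<inter> F v'" "a (I v) \<noteq> 0"
      using I[OF v(1)] I[OF v(2)] by auto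
    then have "F v = F v'"
      by (rule extremal_rays_eq_if_Int_nonzero[OF C1 F(2)[OF v(1)] F(2)[OF v(2)]])
    then show "v = v'"
      using F(1) v by (auto dest: inj_onD)
  qed
  then show ?thesis
    using card_inj_on_le[of I W "{..<r}"] I by auto
qed

lemma exists_nd_rank_eq:
  fixes C1 :: "(real^'m) set" and C2 :: "(real^'n) set"
  assumes C1: "convex_cone C1" and S: "independent S" "C2 = conical_hull S"
    and q: "q \<le> card (extremal_rays C1)" "q \<le> card S"
  shows "\<exists>M \<in> cone_tensor C1 C2. nd_rank C1 C2 M = q"
proof -
  obtain W where W: "W \<subseteq> S" "card W = q" "finite W"
    using obtain_subset_with_card_n[OF q(2)] by metis
  obtain R where R: "R \<subseteq> extremal_rays C1" "card R = q" "finite R"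
    using obtain_subset_with_card_n[OF q(1)] by metis
  obtain F where F: "F ` W \<subseteq> R" "inj_on F W"
    using card_le_inj[of W R] W R by auto
  have rays: "F v \<in> extremal_rays C1" if "v \<in> W" for v
    using F(1) R(1) that by blast
  have "\<exists>x. x \<in> F v - {0}" if "v \<in> W" for v
    using extremal_ray_obtain_nonzero[OF rays[OF that]] by blast
  then obtain u where u: "\<And>v. v \<in> W \<Longrightarrow> u v \<in> F v - {0}"
    by metis
  define M where "M = (\<Sum>v\<in>W. outer_prod (u v) v)"
  have "u v \<in> C1 \<and> v \<in> C2" if "v \<in> W" for v
    using u[OF that] rays[OF that] face_of_imp_subset subset_conical_hull W(1) S(2) that
    by (fastforce simp: extremal_rays_def)
  then have dec: "nd_decomp C1 C2 M q"
    unfolding M_def W(2)[symmetric] by (rule nd_decomp_sum[OF W(3)])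
  have "nd_rank C1 C2 M = q"
    unfolding nd_rank_def
  proof (rule Least_equality)
    show "nd_decomp C1 C2 M q" by (rule dec)
    show "q \<le> r" if "nd_decomp C1 C2 M r" for r
      using card_le_nd_decomp_length[OF C1 S(1) equalityD1[OF S(2)] W(1) F(2) rays u] that W(2)
      by (simp add: M_def)
  qed
  moreover have "M \<in> cone_tensor C1 C2"
    using dec by (auto simp: cone_tensor_def)
  ultimately show ?thesis
    by blast
qed

theorem theorem6:
  fixes q1 q2 :: nat
  assumes "card (extremal_rays (order_cone :: (real ^ ('p1::{finite,order})) set)) = q1"
    and "card (extremal_rays (order_cone :: (real ^ ('p2::{finite,order})) set)) = q2"
    and "simplicial (order_cone :: (real ^ ('p2::{finite,order})) set)"
  shows "(\<forall>M \<in> cone_tensor (order_cone :: (real ^ ('p1::{finite,order})) set) (order_cone :: (real ^ ('p2::{finite,order})) set).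
            nd_rank order_cone order_cone M \<le> min q1 q2)
       \<and> (\<exists>M \<in> cone_tensor (order_cone :: (real ^ ('p1::{finite,order})) set) (order_cone :: (real ^ ('p2::{finite,order})) set).
            nd_rank order_cone order_cone M = min q1 q2)"
proof -
  let ?C1 = "order_cone :: (real ^ ('p1::{finite,order})) set"
  let ?C2 = "order_cone :: (real ^ ('p2::{finite,order})) set"
  obtain S where S: "independent S" "?C2 = conical_hull S"
    using assms(3) by (auto simp: simplicial_def)
  have "q2 \<le> card S"
    using card_extremal_rays_le[OF convex_cone_order_cone finiteI_independent[OF S(1)]] S(2)
      subset_conical_hull assms(2) by auto
  then have lower: "\<exists>M \<in> cone_tensor ?C1 ?C2. nd_rank ?C1 ?C2 M = min q1 q2"
    using exists_nd_rank_eq[of ?C1 S ?C2 "min q1 q2", OF convex_cone_order_cone S] assms(1)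
    by simp
  obtain G1 :: "(real ^ ('p1::{finite,order})) set"
    where G1: "finite G1" "G1 \<subseteq> ?C1" "?C1 \<subseteq> conical_hull G1" "card G1 \<le> q1"
    using order_cone_generators assms(1) by metis
  obtain G2 :: "(real ^ ('p2::{finite,order})) set"
    where G2: "finite G2" "G2 \<subseteq> ?C2" "?C2 \<subseteq> conical_hull G2" "card G2 \<le> q2"
    using order_cone_generators assms(2) by metis
  have "\<forall>M \<in> cone_tensor ?C1 ?C2. nd_rank ?C1 ?C2 M \<le> min q1 q2"
    using nd_rank_le_card_generators[OF convex_cone_order_cone convex_cone_order_cone _ G1(1-3) G2(1-3)]
      G1(4) G2(4) by fastforce
  with lower show ?thesis
    by blast
qed

end
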